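(* Let $$A= \begin{pmatrix} 1& -2& 2\\ 2&-1& 2\\ 2&-2& 3 \end{pmatrix},\quad B= \begin{pmatrix} 1& 2& 2\\ 2&1& 2\\ 2&2& 3 \end{pmatrix},\quad C= \begin{pmatrix} -1& 2& 2\\ -2&1& 2\\ -2&2& 3 \end{pmatrix},$$ and let $P=(x,y,z)$ be a primitive Pythagorean triple. Then the points of $\mathbb{R}^3$ with coordinates $AP^\top$, $BP^\top$, $CP^\top$ are the vertices of a triangle of area $2xy\sqrt{17}$.
   Context: A primitive Pythagorean triple is a triple $(x,y,z)$ of positive integers with $x^2+y^2=z^2$, $\gcd(x,y)=1$ and $x$ odd. Triples are regarded as row vectors and $\top$ denotes transpose; $\mathbb{R}^3$ carries the Euclidean metric. *)

theory Defs
  imports "HOL-Analysis.Analysis"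
begin

definition primitive_pythagorean_triple :: "int \<Rightarrow> int \<Rightarrow> int \<Rightarrow> bool" where
  "primitive_pythagorean_triple x y z \<longleftrightarrow>
     x > 0 \<and> y > 0 \<and> z > 0 \<and> x\<^sup>2 + y\<^sup>2 = z\<^sup>2 \<and> gcd x y = 1 \<and> odd x"

definition triangle_area :: "real^3 \<Rightarrow> real^3 \<Rightarrow> real^3 \<Rightarrow> real" where
  "triangle_area a b c = norm (cross3 (b - a) (c - a)) / 2"

definition matA :: "real^3^3" where
  "matA = vector [vector [1, -2, 2], vector [2, -1, 2], vector [2, -2, 3]]"
definition matB :: "real^3^3" where
  "matB = vector [vector [1, 2, 2], vector [2, 1, 2], vector [2, 2, 3]]"
definition matC :: "real^3^3" where
  "matC = vector [vector [-1, 2, 2], vector [-2, 1, 2], vector [-2, 2, 3]]"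

end

theory Submission
  imports Defs
begin

text \<open>The cross product of the two edges from \<open>A P\<^sup>T\<close> is \<open>4xy (2, 2, -3)\<close>, whatever \<open>z\<close> is.
  So the triangle is non-degenerate as soon as \<open>xy \<noteq> 0\<close>, and its area is \<open>2 |xy| \<surd>17\<close>;
  of the primitivity hypothesis only \<open>x, y > 0\<close> is used.\<close>

lemma collinear_iff_cross3_edges_eq_0:
  fixes a b c :: "real^3"
  shows "collinear {a, b, c} \<longleftrightarrow> cross3 (b - a) (c - a) = 0"
proof -
  have "collinear {a, b, c} \<longleftrightarrow> collinear {b, a, c}"
    by (simp add: insert_commute)
  also have "\<dots> \<longleftrightarrow> collinear {0, b - a, c - a}"
    by (simp add: collinear_3)
  finally show ?thesis
    by (simp add: cross_eq_0)
qed

lemma forall_3: "(\<forall>i::3. Q i) \<longleftrightarrow> Q 1 \<and> Q 2 \<and> Q 3"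
  by (metis exhaust_3)

lemma cross3_edges_matA_matB_matC:
  fixes x y z :: real
  defines "P \<equiv> vector [x, y, z] :: real^3"
  shows "cross3 (matB *v P - matA *v P) (matC *v P - matA *v P) = (4 * x * y) *\<^sub>R vector [2, 2, -3]"
  unfolding P_def matA_def matB_def matC_def
  by (simp add: vec_eq_iff forall_3 cross3_simps matrix_vector_mult_def sum_3 algebra_simps)

lemma norm_vector_2_2_minus_3: "norm (vector [2, 2, -3] :: real^3) = sqrt 17"
  by (simp add: norm_eq_sqrt_inner inner_vec_def sum_3)

theorem mainTheorem12:
  fixes x y z :: int
  assumes "primitive_pythagorean_triple x y z"
  defines "P \<equiv> (vector [of_int x, of_int y, of_int z] :: real^3)"
  shows "\<not> collinear {matA *v P, matB *v P, matC *v P}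
    \<and> triangle_area (matA *v P) (matB *v P) (matC *v P) = 2 * of_int x * of_int y * sqrt 17"
proof -
  have xy_pos: "4 * real_of_int x * real_of_int y > 0"
    using assms(1) unfolding primitive_pythagorean_triple_def by simp
  have cross: "cross3 (matB *v P - matA *v P) (matC *v P - matA *v P)
      = (4 * real_of_int x * real_of_int y) *\<^sub>R vector [2, 2, -3]"
    unfolding P_def by (rule cross3_edges_matA_matB_matC)
  have "(vector [2, 2, -3] :: real^3) \<noteq> 0"
    using norm_vector_2_2_minus_3 by auto
  then have "\<not> collinear {matA *v P, matB *v P, matC *v P}"
    using xy_pos by (auto simp: collinear_iff_cross3_edges_eq_0 cross)
  moreover have "triangle_area (matA *v P) (matB *v P) (matC *v P) = 2 * of_int x * of_int y * sqrt 17"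
    using xy_pos by (simp add: triangle_area_def cross norm_vector_2_2_minus_3)
  ultimately show ?thesis ..
qed

end
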